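(* Let $\Delta=\{(u,v)\in\mathbb{R}^2: 0\le v\le1,\ 0\le u\le v\}$. If $a,b,p,q>0$ and $b<1$, then $$\int_\Delta u^{a-1}(1-u)^{b-1}v^{p-1}(1-v)^{q-1}\,du\,dv=\frac{B(a+p,q)}{a}\lim_{t\to1^-,\ t\in\mathbb{R}}{}_3F_2\Big(\begin{matrix}a,\ 1-b,\ a+p\\ 1+a,\ a+p+q\end{matrix};t\Big).$$
   Context: $B(u,v)=\int_0^1t^{u-1}(1-t)^{v-1}dt$ is the beta function. With $(\alpha,n)=\Gamma(\alpha+n)/\Gamma(\alpha)$, the generalized hypergeometric function is ${}_3F_2\big(\begin{smallmatrix}\alpha_1,\alpha_2,\alpha_3\\ \beta_1,\beta_2\end{smallmatrix};x\big)=\sum_{n\ge0}\frac{(\alpha_1,n)(\alpha_2,n)(\alpha_3,n)}{(\beta_1,n)(\beta_2,n)(1,n)}x^n$ for $|x|<1$. *)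

theory Defs
  imports "HOL-Analysis.Analysis"
begin

definition betaB :: "real \<Rightarrow> real \<Rightarrow> real" where
  "betaB u v = (LINT t:{0..1}|lborel. t powr (u - 1) * (1 - t) powr (v - 1))"

definition hyp3F2 :: "real \<Rightarrow> real \<Rightarrow> real \<Rightarrow> real \<Rightarrow> real \<Rightarrow> real \<Rightarrow> real" where
  "hyp3F2 a1 a2 a3 b1 b2 x =
     (\<Sum>n. pochhammer a1 n * pochhammer a2 n * pochhammer a3 n /
           (pochhammer b1 n * pochhammer b2 n * pochhammer 1 n) * x ^ n)"

definition Delta :: "(real \<times> real) set" where
  "Delta = {(u, v). 0 \<le> v \<and> v \<le> 1 \<and> 0 \<le> u \<and> u \<le> v}"

end

theory Submission
  imports Defs
begin

(* Expand (1 - u) powr (b - 1) by the binomial series; since b < 1 all its coefficients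
   (1 - b)_n / n! are nonnegative, so the integral over Delta may be taken termwise (monotone
   convergence).  The n-th term integrates to B(a + p + n, q) / (a + n), which is B(a + p, q) / a
   times the n-th coefficient of the 3F2 series.  The integral is finite, being dominated by
   B(a, b) B(p, q), so the 3F2 coefficients are summable; as they are nonnegative, Abel's theorem
   identifies their sum with the limit of the 3F2 function at 1 from the left. *)

definition hyp3F2_coeff :: "real \<Rightarrow> real \<Rightarrow> real \<Rightarrow> real \<Rightarrow> real \<Rightarrow> nat \<Rightarrow> real" where
  "hyp3F2_coeff a1 a2 a3 b1 b2 n = pochhammer a1 n * pochhammer a2 n * pochhammer a3 n /
     (pochhammer b1 n * pochhammer b2 n * pochhammer 1 n)"

lemma hyp3F2_eq_suminf: "hyp3F2 a1 a2 a3 b1 b2 x = (\<Sum>n. hyp3F2_coeff a1 a2 a3 b1 b2 n * x ^ n)"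
  unfolding hyp3F2_def hyp3F2_coeff_def ..

lemma hyp3F2_coeff_nonneg:
  assumes "a1 > 0" "a2 > 0" "a3 > 0" "b1 > 0" "b2 > 0"
  shows "hyp3F2_coeff a1 a2 a3 b1 b2 n \<ge> 0"
  using assms
  by (auto simp: hyp3F2_coeff_def
      intro!: divide_nonneg_pos mult_nonneg_nonneg mult_pos_pos pochhammer_nonneg pochhammer_pos)

lemma tendsto_power_series_at_left_1:
  fixes c :: "nat \<Rightarrow> real"
  assumes "summable (\<lambda>n. \<bar>c n\<bar>)"
  shows "((\<lambda>t. \<Sum>n. c n * t ^ n) \<longlongrightarrow> (\<Sum>n. c n)) (at_left 1)"
proof -
  have "uniform_limit {0..1} (\<lambda>n t. \<Sum>i<n. c i * t ^ i) (\<lambda>t. \<Sum>i. c i * t ^ i) sequentially"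
    by (rule Weierstrass_m_test_ev[OF _ assms])
       (auto intro!: always_eventually mult_left_le power_le_one simp: abs_mult power_abs)
  then have "continuous_on {0..1} (\<lambda>t. \<Sum>i. c i * t ^ i)"
    by (rule uniform_limit_theorem[rotated]) (auto intro!: eventuallyI continuous_intros)
  from continuous_on_Icc_at_leftD[OF this] show ?thesis
    by simp
qed

lemma one_minus_powr_sums:
  fixes u c :: real
  assumes "\<bar>u\<bar> < 1"
  shows "(\<lambda>n. pochhammer (- c) n / fact n * u ^ n) sums ((1 - u) powr c)"
proof -
  have "(c gchoose n) * (- u) ^ n = pochhammer (- c) n / fact n * u ^ n" for n
    unfolding gbinomial_pochhammer power_minus[of u n] by simp
  then show ?thesis
    using gen_binomial_real[of "- u" c] assms by simp
qed

lemma nn_integral_Beta: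
  fixes x y :: real
  assumes "x > 0" "y > 0"
  shows "(\<integral>\<^sup>+t\<in>{0..1}. ennreal (t powr (x - 1) * (1 - t) powr (y - 1)) \<partial>lborel) = ennreal (Beta x y)"
  by (rule nn_integral_has_integral_lebesgue'[OF _ has_integral_Beta_real[OF assms]]) simp

lemma Beta_real_pos:
  fixes x y :: real
  assumes "x > 0" "y > 0"
  shows "Beta x y > 0"
  using assms by (simp add: Beta_def Gamma_real_pos)

lemma betaB_eq_Beta:
  fixes x y :: real
  assumes "x > 0" "y > 0"
  shows "betaB x y = Beta x y"
proof -
  have "(\<integral>\<^sup>+t. ennreal (t powr (x - 1) * (1 - t) powr (y - 1) * indicator {0..1} t) \<partial>lborel)
      = ennreal (Beta x y)"
    using nn_integral_Beta[OF assms] by (simp add: nn_integral_set_ennreal)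
  moreover have "Beta x y \<ge> 0"
    using Beta_real_pos[OF assms] by simp
  ultimately show ?thesis
    unfolding betaB_def set_lebesgue_integral_def
    by (subst (asm) nn_integral_eq_integrable) (auto simp: mult.commute)
qed

lemma Beta_plus_of_nat:
  fixes x y :: real
  assumes "x > 0" "y > 0"
  shows "Beta (x + real n) y = Beta x y * pochhammer x n / pochhammer (x + y) n"
proof -
  have "pochhammer x n = Gamma (x + n) / Gamma x"
    and "pochhammer (x + y) n = Gamma (x + y + n) / Gamma (x + y)"
    using assms by (auto intro!: pochhammer_Gamma elim!: nonpos_Ints_cases)
  moreover have "Gamma x > 0" "Gamma (x + y) > 0" "Gamma (x + y + n) > 0"
    using assms by (auto intro!: Gamma_real_pos)
  ultimately show ?thesis
    by (simp add: Beta_def field_simps add_ac)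
qed

lemma Beta_plus_of_nat_divide:
  fixes a p q r :: real
  assumes "a > 0" "p > 0" "q > 0"
  shows "pochhammer r n / fact n * (Beta (a + n + p) q / (a + n))
    = Beta (a + p) q / a * hyp3F2_coeff a r (a + p) (1 + a) (a + p + q) n"
proof -
  have "Beta (a + n + p) q = Beta (a + p) q * pochhammer (a + p) n / pochhammer (a + p + q) n"
    using Beta_plus_of_nat[of "a + p" q n] assms by (simp add: add_ac)
  moreover have "inverse (a + n) = pochhammer a n / (a * pochhammer (1 + a) n)"
  proof -
    have "pochhammer a n \<noteq> 0"
      using assms pochhammer_pos[of a n] by auto
    then have "inverse (a + n) = pochhammer a n / (pochhammer a n * (a + n))"
      by (simp add: divide_inverse)
    also have "pochhammer a n * (a + n) = a * pochhammer (1 + a) n"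
      using pochhammer_Suc[of a n] pochhammer_rec[of a n] by (simp add: add_ac)
    finally show ?thesis .
  qed
  ultimately show ?thesis
    by (simp add: hyp3F2_coeff_def divide_inverse mult_ac flip: pochhammer_fact)
qed

lemma set_integrable_if_set_nn_integral_eq:
  fixes f :: "'a \<Rightarrow> real"
  assumes [measurable]: "f \<in> borel_measurable M" "A \<in> sets M"
    and "\<And>x. x \<in> A \<Longrightarrow> f x \<ge> 0" "r \<ge> 0"
    and "(\<integral>\<^sup>+x\<in>A. ennreal (f x) \<partial>M) = ennreal r"
  shows "set_integrable M A f \<and> (LINT x:A|M. f x) = r"
proof -
  have meas: "(\<lambda>x. indicator A x * f x) \<in> borel_measurable M"
    by measurable
  have "(\<integral>\<^sup>+x. ennreal (indicator A x * f x) \<partial>M) = ennreal r"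
    using assms(5) by (simp add: nn_integral_set_ennreal mult.commute)
  moreover have "AE x in M. 0 \<le> indicator A x * f x"
    using assms(3) by (intro AE_I2) (simp split: split_indicator)
  ultimately have "integrable M (\<lambda>x. indicator A x * f x) \<and> integral\<^sup>L M (\<lambda>x. indicator A x * f x) = r"
    using nn_integral_eq_integrable[OF meas _ assms(4)] by blast
  then show ?thesis
    by (simp add: set_integrable_def set_lebesgue_integral_def)
qed

lemma sets_borel_Delta [measurable]: "Delta \<in> sets borel"
proof (rule borel_closed)
  have "Delta = {x. 0 \<le> snd x \<and> snd x \<le> 1 \<and> 0 \<le> fst x \<and> fst x \<le> snd x}"
    by (auto simp: Delta_def)
  also have "closed \<dots>"
    by (intro closed_Collect_conj closed_Collect_le continuous_intros)
  finally show "closed Delta" .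
qed

lemma nn_integral_Delta:
  fixes f :: "real \<times> real \<Rightarrow> ennreal"
  assumes [measurable]: "f \<in> borel_measurable borel"
  shows "(\<integral>\<^sup>+x\<in>Delta. f x \<partial>lborel) = (\<integral>\<^sup>+v\<in>{0..1}. (\<integral>\<^sup>+u\<in>{0..v}. f (u, v) \<partial>lborel) \<partial>lborel)"
proof -
  have "(\<integral>\<^sup>+x\<in>Delta. f x \<partial>lborel)
      = (\<integral>\<^sup>+v. (\<integral>\<^sup>+u. f (u, v) * indicator Delta (u, v) \<partial>lborel) \<partial>lborel)"
    by (subst lborel_prod[symmetric], rule lborel_pair.nn_integral_snd[symmetric])
       (simp add: lborel_prod measurable_lborel1)
  also have "\<dots> = (\<integral>\<^sup>+v\<in>{0..1}. (\<integral>\<^sup>+u\<in>{0..v}. f (u, v) \<partial>lborel) \<partial>lborel)"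
    by (subst nn_integral_multc[symmetric], measurable)
       (auto intro!: nn_integral_cong simp: Delta_def split: split_indicator)
  finally show ?thesis .
qed

lemma nn_integral_Delta_product_le:
  fixes f g :: "real \<Rightarrow> ennreal"
  assumes [measurable]: "f \<in> borel_measurable borel" "g \<in> borel_measurable borel"
  shows "(\<integral>\<^sup>+x\<in>Delta. f (fst x) * g (snd x) \<partial>lborel)
    \<le> (\<integral>\<^sup>+u\<in>{0..1}. f u \<partial>lborel) * (\<integral>\<^sup>+v\<in>{0..1}. g v \<partial>lborel)"
proof -
  have inner: "(\<integral>\<^sup>+u\<in>{0..v}. f u * g v \<partial>lborel) = (\<integral>\<^sup>+u\<in>{0..v}. f u \<partial>lborel) * g v" for v
  proof -
    have "(\<integral>\<^sup>+u. f u * indicator {0..v} u * g v \<partial>lborel) = (\<integral>\<^sup>+u\<in>{0..v}. f u \<partial>lborel) * g v"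
      by (rule nn_integral_multc) measurable
    then show ?thesis
      by (simp add: mult_ac)
  qed
  have "(\<lambda>x. f (fst x) * g (snd x)) \<in> borel_measurable borel"
    unfolding borel_prod[symmetric] by measurable
  then have "(\<integral>\<^sup>+x\<in>Delta. f (fst x) * g (snd x) \<partial>lborel)
      = (\<integral>\<^sup>+v\<in>{0..1}. (\<integral>\<^sup>+u\<in>{0..v}. f u * g v \<partial>lborel) \<partial>lborel)"
    by (simp add: nn_integral_Delta)
  also have "\<dots> = (\<integral>\<^sup>+v\<in>{0..1}. (\<integral>\<^sup>+u\<in>{0..v}. f u \<partial>lborel) * g v \<partial>lborel)"
    by (rule nn_integral_cong) (subst inner, rule refl)
  also have "\<dots> \<le> (\<integral>\<^sup>+v\<in>{0..1}. (\<integral>\<^sup>+u\<in>{0..1}. f u \<partial>lborel) * g v \<partial>lborel)"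
  proof (intro nn_integral_mono)
    fix v :: real
    show "(\<integral>\<^sup>+u\<in>{0..v}. f u \<partial>lborel) * g v * indicator {0..1} v
        \<le> (\<integral>\<^sup>+u\<in>{0..1}. f u \<partial>lborel) * g v * indicator {0..1} v"
    proof (cases "v \<le> 1")
      case True
      then show ?thesis
        by (intro mult_right_mono nn_integral_mono) (auto split: split_indicator)
    qed simp
  qed
  also have "\<dots> = (\<integral>\<^sup>+u\<in>{0..1}. f u \<partial>lborel) * (\<integral>\<^sup>+v\<in>{0..1}. g v \<partial>lborel)"
    by (simp add: nn_integral_cmult mult.assoc)
  finally show ?thesis .
qed

definition Delta_monomial :: "real \<Rightarrow> real \<Rightarrow> real \<Rightarrow> real \<times> real \<Rightarrow> real" where
  "Delta_monomial e p q = (\<lambda>(u, v). u powr (e - 1) * v powr (p - 1) * (1 - v) powr (q - 1))"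

definition Delta_integrand :: "real \<Rightarrow> real \<Rightarrow> real \<Rightarrow> real \<Rightarrow> real \<times> real \<Rightarrow> real" where
  "Delta_integrand a b p q =
     (\<lambda>(u, v). u powr (a - 1) * (1 - u) powr (b - 1) * v powr (p - 1) * (1 - v) powr (q - 1))"

lemma Delta_monomial_nonneg: "Delta_monomial e p q x \<ge> 0"
  by (simp add: Delta_monomial_def case_prod_beta)

lemma Delta_integrand_nonneg: "Delta_integrand a b p q x \<ge> 0"
  by (simp add: Delta_integrand_def case_prod_beta)

lemma borel_measurable_Delta_monomial [measurable]: "Delta_monomial e p q \<in> borel_measurable borel"
  unfolding Delta_monomial_def borel_prod[symmetric] by measurable

lemma borel_measurable_Delta_integrand [measurable]: "Delta_integrand a b p q \<in> borel_measurable borel"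
  unfolding Delta_integrand_def borel_prod[symmetric] by measurable

lemma nn_integral_Delta_monomial:
  fixes e p q :: real
  assumes "e > 0" "p > 0" "q > 0"
  shows "(\<integral>\<^sup>+x\<in>Delta. ennreal (Delta_monomial e p q x) \<partial>lborel) = ennreal (Beta (e + p) q / e)"
proof -
  have inner: "(\<integral>\<^sup>+u\<in>{0..v}. ennreal (Delta_monomial e p q (u, v)) \<partial>lborel)
      = ennreal (v powr (e + p - 1) * (1 - v) powr (q - 1) / e)" if "0 \<le> v" for v
  proof (rule nn_integral_has_integral_lebesgue')
    have int: "((\<lambda>u. u powr (e - 1) * v powr (p - 1) * (1 - v) powr (q - 1)) has_integral
        (v powr e / e * v powr (p - 1) * (1 - v) powr (q - 1))) {0..v}"
      using has_integral_powr_from_0[of "e - 1" v] assms that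
      by (intro has_integral_mult_left) simp
    have "v powr (e + p - 1) = v powr e * v powr (p - 1)"
      by (simp add: add_diff_eq flip: powr_add)
    then show "((\<lambda>u. Delta_monomial e p q (u, v)) has_integral
        (v powr (e + p - 1) * (1 - v) powr (q - 1) / e)) {0..v}"
      unfolding Delta_monomial_def case_prod_conv
      by (intro has_integral_eq_rhs[OF int]) (simp add: times_divide_eq_left mult_ac)
  qed (simp add: Delta_monomial_nonneg)
  have "(\<integral>\<^sup>+x\<in>Delta. ennreal (Delta_monomial e p q x) \<partial>lborel)
      = (\<integral>\<^sup>+v\<in>{0..1}. ennreal (v powr (e + p - 1) * (1 - v) powr (q - 1) / e) \<partial>lborel)"
    by (subst nn_integral_Delta, measurable)
       (auto intro!: nn_integral_cong simp: inner split: split_indicator)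
  also have "\<dots> = ennreal (Beta (e + p) q / e)"
    using assms
    by (intro nn_integral_has_integral_lebesgue' has_integral_divide has_integral_Beta_real) auto
  finally show ?thesis .
qed

(* At v = 1 both sides vanish because 0 powr x = 0; this covers the corner u = 1,
   where the binomial series of (1 - u) powr (b - 1) is not available. *)
lemma Delta_integrand_sums:
  fixes a b p q u v :: real
  assumes "(u, v) \<in> Delta"
  shows "(\<lambda>n. pochhammer (1 - b) n / fact n * Delta_monomial (a + n) p q (u, v))
    sums Delta_integrand a b p q (u, v)"
proof (cases "v = 1")
  case False
  with assms have u: "0 \<le> u" "u < 1"
    by (auto simp: Delta_def)
  have "u powr (a + n - 1) = u powr (a - 1) * u ^ n" for n
  proof (cases "u = 0")
    case False
    with u have "u > 0"
      by simp
    then show ?thesis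
      by (simp add: algebra_simps flip: powr_realpow powr_add)
  qed simp
  moreover have "(\<lambda>n. u powr (a - 1) * (pochhammer (1 - b) n / fact n * u ^ n) * (v powr (p - 1) * (1 - v) powr (q - 1)))
      sums (u powr (a - 1) * (1 - u) powr (b - 1) * (v powr (p - 1) * (1 - v) powr (q - 1)))"
    using one_minus_powr_sums[of u "b - 1"] u by (intro sums_mult sums_mult2) simp_all
  ultimately show ?thesis
    by (simp add: Delta_monomial_def Delta_integrand_def mult_ac)
qed (simp add: Delta_monomial_def Delta_integrand_def)

lemma nn_integral_Delta_series_term:
  fixes a p q r :: real
  assumes "a > 0" "p > 0" "q > 0" "r > 0"
  shows "(\<integral>\<^sup>+x\<in>Delta. ennreal (pochhammer r n / fact n * Delta_monomial (a + n) p q x) \<partial>lborel)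
    = ennreal (Beta (a + p) q / a * hyp3F2_coeff a r (a + p) (1 + a) (a + p + q) n)"
proof -
  define C where "C = pochhammer r n / fact n"
  have "C \<ge> 0"
    using assms by (simp add: C_def pochhammer_nonneg)
  then have "(\<integral>\<^sup>+x\<in>Delta. ennreal (C * Delta_monomial (a + n) p q x) \<partial>lborel)
      = ennreal C * (\<integral>\<^sup>+x\<in>Delta. ennreal (Delta_monomial (a + n) p q x) \<partial>lborel)"
    by (subst nn_integral_cmult[symmetric]) (auto simp: ennreal_mult Delta_monomial_nonneg mult.assoc)
  also have "\<dots> = ennreal C * ennreal (Beta (a + n + p) q / (a + n))"
    using nn_integral_Delta_monomial[of "a + n" p q] assms by simp
  also have "\<dots> = ennreal (C * (Beta (a + n + p) q / (a + n)))"
    using \<open>C \<ge> 0\<close> by (rule ennreal_mult'[symmetric])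
  finally show ?thesis
    using Beta_plus_of_nat_divide[OF assms(1-3)] by (simp add: C_def)
qed

lemma nn_integral_Delta_integrand_eq_suminf:
  fixes a b p q :: real
  assumes "a > 0" "p > 0" "q > 0" "b < 1"
  shows "(\<integral>\<^sup>+x\<in>Delta. ennreal (Delta_integrand a b p q x) \<partial>lborel)
    = (\<Sum>n. ennreal (Beta (a + p) q / a * hyp3F2_coeff a (1 - b) (a + p) (1 + a) (a + p + q) n))"
proof -
  define t where "t n x = pochhammer (1 - b) n / fact n * Delta_monomial (a + n) p q x" for n x
  have t_nonneg: "t n x \<ge> 0" for n x
    using assms by (simp add: t_def pochhammer_nonneg Delta_monomial_nonneg)
  have pointwise: "ennreal (Delta_integrand a b p q x) * indicator Delta x
      = (\<Sum>n. ennreal (t n x) * indicator Delta x)" for x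
  proof (cases "x \<in> Delta")
    case True
    then have sums: "(\<lambda>n. t n x) sums Delta_integrand a b p q x"
      using Delta_integrand_sums[where u = "fst x" and v = "snd x"] by (simp add: t_def)
    have "ennreal (Delta_integrand a b p q x) = (\<Sum>n. ennreal (t n x))"
      using t_nonneg sums_summable[OF sums] by (simp add: sums_unique[OF sums] suminf_ennreal2)
    with True show ?thesis
      by simp
  qed simp
  have "(\<integral>\<^sup>+x\<in>Delta. ennreal (Delta_integrand a b p q x) \<partial>lborel)
      = (\<integral>\<^sup>+x. (\<Sum>n. ennreal (t n x) * indicator Delta x) \<partial>lborel)"
    by (rule nn_integral_cong) (rule pointwise)
  also have "\<dots> = (\<Sum>n. \<integral>\<^sup>+x\<in>Delta. ennreal (t n x) \<partial>lborel)"
    by (rule nn_integral_suminf) (simp add: t_def)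
  also have "\<dots> = (\<Sum>n. ennreal (Beta (a + p) q / a * hyp3F2_coeff a (1 - b) (a + p) (1 + a) (a + p + q) n))"
    unfolding t_def using assms by (intro suminf_cong nn_integral_Delta_series_term) auto
  finally show ?thesis .
qed

lemma nn_integral_Delta_integrand_finite:
  fixes a b p q :: real
  assumes "a > 0" "b > 0" "p > 0" "q > 0"
  shows "(\<integral>\<^sup>+x\<in>Delta. ennreal (Delta_integrand a b p q x) \<partial>lborel) < \<infinity>"
proof -
  define f where "f u = ennreal (u powr (a - 1) * (1 - u) powr (b - 1))" for u :: real
  define g where "g v = ennreal (v powr (p - 1) * (1 - v) powr (q - 1))" for v :: real
  have "(\<integral>\<^sup>+x\<in>Delta. ennreal (Delta_integrand a b p q x) \<partial>lborel)
      = (\<integral>\<^sup>+x\<in>Delta. f (fst x) * g (snd x) \<partial>lborel)"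
    by (simp add: f_def g_def Delta_integrand_def case_prod_beta ennreal_mult mult_ac)
  also have "\<dots> \<le> (\<integral>\<^sup>+u\<in>{0..1}. f u \<partial>lborel) * (\<integral>\<^sup>+v\<in>{0..1}. g v \<partial>lborel)"
    by (rule nn_integral_Delta_product_le) (simp_all add: f_def g_def)
  also have "\<dots> = ennreal (Beta a b) * ennreal (Beta p q)"
    using assms by (simp add: f_def g_def nn_integral_Beta)
  also have "\<dots> < \<infinity>"
    by (simp add: ennreal_mult_less_top)
  finally show ?thesis .
qed

lemma Delta_integrand_set_integral:
  fixes a b p q :: real
  assumes "a > 0" "b > 0" "p > 0" "q > 0" "b < 1"
  defines "c \<equiv> hyp3F2_coeff a (1 - b) (a + p) (1 + a) (a + p + q)"
  shows "summable c" "set_integrable lborel Delta (Delta_integrand a b p q)"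
    and "(LINT x:Delta|lborel. Delta_integrand a b p q x) = Beta (a + p) q / a * (\<Sum>n. c n)"
proof -
  define K where "K = Beta (a + p) q / a"
  have c_nonneg: "c n \<ge> 0" for n
    unfolding c_def using assms by (intro hyp3F2_coeff_nonneg) auto
  have K_pos: "K > 0"
    using assms Beta_real_pos[of "a + p" q] by (simp add: K_def)
  have series: "(\<integral>\<^sup>+x\<in>Delta. ennreal (Delta_integrand a b p q x) \<partial>lborel) = (\<Sum>n. ennreal (K * c n))"
    using nn_integral_Delta_integrand_eq_suminf[of a p q b] assms by (simp add: K_def c_def)
  moreover have "(\<integral>\<^sup>+x\<in>Delta. ennreal (Delta_integrand a b p q x) \<partial>lborel) < \<infinity>"
    using nn_integral_Delta_integrand_finite[of a b p q] assms by simp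
  ultimately have "summable (\<lambda>n. K * c n)"
    using K_pos c_nonneg by (intro summable_suminf_not_top) auto
  then show summable: "summable c"
    using K_pos by (simp add: summable_cmult_iff)
  have "(\<integral>\<^sup>+x\<in>Delta. ennreal (Delta_integrand a b p q x) \<partial>lborel) = ennreal (K * (\<Sum>n. c n))"
    using series summable K_pos c_nonneg by (simp add: suminf_ennreal2 suminf_mult)
  then have "set_integrable lborel Delta (Delta_integrand a b p q)
      \<and> (LINT x:Delta|lborel. Delta_integrand a b p q x) = K * (\<Sum>n. c n)"
    using K_pos c_nonneg summable
    by (intro set_integrable_if_set_nn_integral_eq) (auto simp: Delta_integrand_nonneg suminf_nonneg)
  then show "set_integrable lborel Delta (Delta_integrand a b p q)"
    and "(LINT x:Delta|lborel. Delta_integrand a b p q x) = Beta (a + p) q / a * (\<Sum>n. c n)"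
    by (simp_all add: K_def)
qed

theorem proposition4p12:
  fixes a b p q :: real
  assumes "a > 0" "b > 0" "p > 0" "q > 0" "b < 1"
  shows "\<exists>L. ((\<lambda>t. hyp3F2 a (1 - b) (a + p) (1 + a) (a + p + q) t) \<longlongrightarrow> L) (at_left 1) \<and>
    set_integrable lborel Delta
      (\<lambda>(u, v). u powr (a - 1) * (1 - u) powr (b - 1) * v powr (p - 1) * (1 - v) powr (q - 1)) \<and>
    (LINT x:Delta|lborel.
      (\<lambda>(u, v). u powr (a - 1) * (1 - u) powr (b - 1) * v powr (p - 1) * (1 - v) powr (q - 1)) x)
      = betaB (a + p) q / a * L"
proof -
  define c where "c = hyp3F2_coeff a (1 - b) (a + p) (1 + a) (a + p + q)"
  have summable: "summable c"
    and integrable: "set_integrable lborel Delta (Delta_integrand a b p q)"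
    and integral: "(LINT x:Delta|lborel. Delta_integrand a b p q x) = Beta (a + p) q / a * (\<Sum>n. c n)"
    using Delta_integrand_set_integral[OF assms] unfolding c_def by auto
  have "c n \<ge> 0" for n
    unfolding c_def using assms by (intro hyp3F2_coeff_nonneg) auto
  then have "((\<lambda>t. hyp3F2 a (1 - b) (a + p) (1 + a) (a + p + q) t) \<longlongrightarrow> (\<Sum>n. c n)) (at_left 1)"
    using tendsto_power_series_at_left_1[of c] summable by (simp add: hyp3F2_eq_suminf c_def)
  moreover have "betaB (a + p) q = Beta (a + p) q"
    using assms by (simp add: betaB_eq_Beta)
  ultimately show ?thesis
    unfolding Delta_integrand_def[symmetric] using integrable integral by auto
qed

end
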